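(* Let $N_A,N_B\ge 1$ be integers and let $\alpha,\beta>0$, $A_0>0$, $N_0>0$. For $i=1,\dots,N_A$ and $j=1,\dots,N_B$ let $X_i$ and $Y_{i,j}$ be independent random variables, with each $X_i$ gamma distributed with shape $\alpha$ and scale $1/\alpha$, and each $Y_{i,j}$ gamma distributed with shape $\beta$ and scale $1/\beta$. Define Bob's irradiance under transmit laser selection and maximum ratio combining as $\mathcal{I}_B=\max_{1\le i\le N_A}\sum_{j=1}^{N_B} X_iY_{i,j}$, his SNR $\gamma_B=A_0\mathcal{I}_B/N_0$, his capacity $C_B=\log_2(1+\gamma_B)$, and, for a codeword rate $\mathcal{R}_B\ge0$, the reliability outage probability $\mathcal{T}^f(\mathcal{R}_B)=\Pr\{\mathcal{R}_B>C_B\}$. Put $\alpha_B=\alpha$, $\beta_B=N_B\beta$ and $\mathcal{X}_B=\frac{N_0(2^{\mathcal{R}_B}-1)}{N_BA_0}$. Then $$\mathcal{T}^f(\mathcal{R}_B)=\big(F_B^{\gamma\gamma}(\mathcal{X}_B)\big)^{N_A},$$ where $F_B^{\gamma\gamma}$ is the cumulative distribution function of a gamma-gamma random variable with parameters $\alpha_B,\beta_B$, i.e. the CDF of the density $$f^{\gamma\gamma}(I)=\frac{2(\alpha_B\beta_B)^{(\alpha_B+\beta_B)/2}}{\Gamma(\alpha_B)\Gamma(\beta_B)}\,I^{(\alpha_B+\beta_B)/2-1}K_{\alpha_B-\beta_B}\big(2\sqrt{\alpha_B\beta_B I}\big),\quad I\ge0.$$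
   Context: This models a free-space optical legitimate link from Alice (with $N_A$ transmit apertures, of which the best one is selected) to Bob (with $N_B$ receive apertures combined by maximum ratio combining), with no pointing errors. For each transmit aperture $i$ the large-scale turbulence factor $X_i$ is common to all of Bob's receive apertures, while small-scale factors are independent; different transmit apertures are independent. $K_c$ is the modified Bessel function of the second kind of order $c$. In the literature this CDF has the closed form $F(x)=\frac{\pi}{\Gamma(\alpha_B)\Gamma(\beta_B)\sin(\pi(\alpha_B-\beta_B))}\Big[\frac{(x\alpha_B\beta_B)^{\beta_B}{}_1F_2(\beta_B;\beta_B+1,\beta_B-\alpha_B+1;\alpha_B\beta_Bx)}{\beta_B\Gamma(\beta_B-\alpha_B+1)}-\frac{(x\alpha_B\beta_B)^{\alpha_B}{}_1F_2(\alpha_B;\alpha_B+1,\alpha_B-\beta_B+1;\alpha_B\beta_Bx)}{\alpha_B\Gamma(\alpha_B-\beta_B+1)}\Big]$. *)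

theory Defs
  imports "HOL-Probability.Probability"
begin

definition gamma_density :: "real \<Rightarrow> real \<Rightarrow> real \<Rightarrow> real" where
  "gamma_density k th x =
     (if x > 0 then x powr (k - 1) * exp (- x / th) / (Gamma k * th powr k) else 0)"

text \<open>Modified Bessel function of the second kind of order nu, for x > 0, via its
  standard integral representation K_nu(x) = int_0^infty exp(-x cosh t) cosh(nu t) dt.\<close>
definition besselK :: "real \<Rightarrow> real \<Rightarrow> real" where
  "besselK nu x = (LINT t:{0..}|lborel. exp (- x * cosh t) * cosh (nu * t))"

definition gg_density :: "real \<Rightarrow> real \<Rightarrow> real \<Rightarrow> real" where
  "gg_density a b I =
     (if I > 0 then
        2 * (a * b) powr ((a + b) / 2) / (Gamma a * Gamma b)
          * I powr ((a + b) / 2 - 1) * besselK (a - b) (2 * sqrt (a * b * I))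
      else 0)"

definition gg_CDF :: "real \<Rightarrow> real \<Rightarrow> real \<Rightarrow> real" where
  "gg_CDF a b x = (LINT I:{0..x}|lborel. gg_density a b I)"

end

theory Submission
  imports Defs
begin

(* Writing S_i = (sum_j Y_ij) / N_B, the gain of branch i is N_B * X_i * S_i. A sum of independent
  gamma variables of common scale is gamma (the convolution is a Beta integral), so S_i is gamma
  with shape N_B * beta and mean 1. For independent positive factors, X_i * S_i has density
  u |-> int_0^oo f(x) g(u/x) / x dx; for unit-mean gamma densities the substitution
  x = sqrt(b u / a) e^s turns the exponent a x + b u / x into 2 sqrt(a b u) cosh s, which is the
  integral representation of K_(a-b), i.e. the gamma-gamma density. The branch gains are independent
  and almost surely positive, so outage happens almost surely exactly when every gain X_i * S_i lies
  below X_B, which has probability F(X_B)^N_A. *)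

lemma gamma_density_nonneg: "0 < k \<Longrightarrow> 0 < th \<Longrightarrow> 0 \<le> gamma_density k th x"
  by (auto simp: gamma_density_def intro!: divide_nonneg_pos)

lemma gamma_density_nonpos [simp]: "x \<le> 0 \<Longrightarrow> gamma_density k th x = 0"
  by (simp add: gamma_density_def)

lemma borel_measurable_gamma_density [measurable]: "gamma_density k th \<in> borel_measurable borel"
  unfolding gamma_density_def by measurable

lemma gamma_density_scale:
  assumes "c > 0" and "th > 0"
  shows "gamma_density k th (x / c) / c = gamma_density k (c * th) x"
proof (cases "x > 0")
  case True
  have "(x / c) powr (k - 1) / (c * th powr k) = x powr (k - 1) / (c * th) powr k"
    using assms True by (simp add: powr_divide powr_mult powr_diff field_simps)
  moreover have "- (x / c) / th = - x / (c * th)"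
    by simp
  ultimately show ?thesis
    using True assms unfolding gamma_density_def by (simp add: divide_simps mult_ac)
qed (use assms in \<open>simp add: divide_nonpos_pos\<close>)

lemma nn_integral_beta_kernel:
  fixes a b x :: real
  assumes "a > 0" and "b > 0" and "x > 0"
  shows "(\<integral>\<^sup>+y. ennreal ((x - y) powr (a - 1) * y powr (b - 1)) * indicator {0<..<x} y \<partial>lborel)
       = ennreal (x powr (a + b - 1) * Beta b a)"
proof -
  have Beta: "(\<integral>\<^sup>+s. ennreal (s powr (b - 1) * (1 - s) powr (a - 1)) * indicator {0<..<1} s \<partial>lborel)
      = ennreal (Beta b a)"
    using has_integral_Beta_real[OF assms(2,1)]
    by (intro nn_integral_has_integral_lebesgue') (auto simp: has_integral_Icc_iff_Ioo)
  have scaled: "ennreal ((x - x * s) powr (a - 1) * (x * s) powr (b - 1)) * indicator {0<..<x} (x * s)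
      = ennreal (x powr (a + b - 2)) * (ennreal (s powr (b - 1) * (1 - s) powr (a - 1)) * indicator {0<..<1} s)"
    for s
  proof (cases "0 < s \<and> s < 1")
    case True
    have "(x - x * s) powr (a - 1) * (x * s) powr (b - 1)
        = x powr (a + b - 2) * (s powr (b - 1) * (1 - s) powr (a - 1))"
    proof -
      have "x - x * s = x * (1 - s)"
        by (simp add: algebra_simps)
      moreover have "x powr (a + b - 2) = x powr (a - 1) * x powr (b - 1)"
        by (simp add: powr_add[symmetric])
      ultimately show ?thesis
        using True assms(3) by (simp add: powr_mult mult_ac)
    qed
    then show ?thesis
      using True assms(3) by (simp add: ennreal_mult'[symmetric])
  qed (use assms(3) in \<open>auto simp: indicator_def zero_less_mult_iff mult_less_cancel_left2\<close>)
  have "(\<integral>\<^sup>+y. ennreal ((x - y) powr (a - 1) * y powr (b - 1)) * indicator {0<..<x} y \<partial>lborel)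
      = ennreal x * (\<integral>\<^sup>+s. ennreal ((x - x * s) powr (a - 1) * (x * s) powr (b - 1)) * indicator {0<..<x} (x * s) \<partial>lborel)"
    using nn_integral_real_affine[of "\<lambda>y. ennreal ((x - y) powr (a - 1) * y powr (b - 1)) * indicator {0<..<x} y" x 0]
      assms(3) by simp
  also have "\<dots> = ennreal x * (ennreal (x powr (a + b - 2)) * ennreal (Beta b a))"
    unfolding scaled by (subst nn_integral_cmult) (simp_all add: Beta)
  also have "\<dots> = ennreal (x powr (a + b - 1) * Beta b a)"
  proof -
    have "Beta b a \<ge> 0"
      using assms by (simp add: Beta_def)
    moreover have "x * x powr (a + b - 2) = x powr (a + b - 1)"
      using assms(3) by (simp add: powr_add[symmetric] powr_diff power2_eq_square)
    ultimately show ?thesis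
      using assms(3) by (simp add: ennreal_mult'[symmetric] mult.assoc)
  qed
  finally show ?thesis .
qed

lemma gamma_density_convolution:
  assumes "k1 > 0" and "k2 > 0" and "th > 0"
  shows "(\<lambda>x. \<integral>\<^sup>+y. ennreal (gamma_density k1 th (x - y)) * ennreal (gamma_density k2 th y) \<partial>lborel)
       = (\<lambda>x. ennreal (gamma_density (k1 + k2) th x))"
proof
  fix x :: real
  show "(\<integral>\<^sup>+y. ennreal (gamma_density k1 th (x - y)) * ennreal (gamma_density k2 th y) \<partial>lborel)
      = ennreal (gamma_density (k1 + k2) th x)"
  proof (cases "x > 0")
    case False
    then have "ennreal (gamma_density k1 th (x - y)) * ennreal (gamma_density k2 th y) = 0" for y
      by (cases "y > 0") auto
    then show ?thesis
      using False by (simp del: mult_eq_0_iff)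
  next
    case True
    define C where "C = exp (- x / th) / (Gamma k1 * th powr k1 * (Gamma k2 * th powr k2))"
    have C: "C \<ge> 0"
      using assms by (auto simp: C_def)
    have "ennreal (gamma_density k1 th (x - y)) * ennreal (gamma_density k2 th y)
        = ennreal C * (ennreal ((x - y) powr (k1 - 1) * y powr (k2 - 1)) * indicator {0<..<x} y)" for y
      using assms C
      by (auto simp: gamma_density_def C_def indicator_def ennreal_mult'[symmetric] exp_add[symmetric]
          field_simps intro!: arg_cong[where f=ennreal])
    then have "(\<integral>\<^sup>+y. ennreal (gamma_density k1 th (x - y)) * ennreal (gamma_density k2 th y) \<partial>lborel)
        = ennreal C * ennreal (x powr (k1 + k2 - 1) * Beta k2 k1)"
      using nn_integral_beta_kernel[OF assms(1,2) True] by (simp add: nn_integral_cmult)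
    also have "\<dots> = ennreal (gamma_density (k1 + k2) th x)"
    proof -
      have G: "Gamma k1 > 0" "Gamma k2 > 0" "Gamma (k1 + k2) > 0"
        using assms by simp_all
      have "k1 + k2 \<notin> \<int>\<^sub>\<le>\<^sub>0"
        using assms nonpos_Ints_nonpos[of "k1 + k2"] by force
      then have B: "Beta k2 k1 = Gamma k1 * Gamma k2 / Gamma (k1 + k2)"
        using Gamma_Gamma_Beta[of k2 k1] G by (simp add: field_simps)
      have "C * (x powr (k1 + k2 - 1) * Beta k2 k1) = gamma_density (k1 + k2) th x"
        unfolding B C_def gamma_density_def using True G by (simp add: powr_add field_simps)
      then show ?thesis
        using C by (simp add: ennreal_mult'[symmetric])
    qed
    finally show ?thesis .
  qed
qed

lemma (in prob_space) gamma_distributed_sum: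
  assumes "finite J" and "J \<noteq> {}" and "th > 0" and "\<And>j. j \<in> J \<Longrightarrow> k j > 0"
    and "\<And>j. j \<in> J \<Longrightarrow> distributed M lborel (Y j) (\<lambda>x. ennreal (gamma_density (k j) th x))"
    and "indep_vars (\<lambda>_. borel) Y J"
  shows "distributed M lborel (\<lambda>\<omega>. \<Sum>j\<in>J. Y j \<omega>) (\<lambda>x. ennreal (gamma_density (\<Sum>j\<in>J. k j) th x))"
  using assms(1,2,4-6)
proof (induction rule: finite_ne_induct)
  case (singleton i)
  then show ?case
    by simp
next
  case (insert i I)
  have "(\<Sum>j\<in>I. k j) > 0"
    using insert by (intro sum_pos) auto
  then have "(\<lambda>x. \<integral>\<^sup>+y. ennreal (gamma_density (k i) th (x - y)) * ennreal (gamma_density (\<Sum>j\<in>I. k j) th y) \<partial>lborel)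
      = (\<lambda>x. ennreal (gamma_density (k i + (\<Sum>j\<in>I. k j)) th x))"
    using insert assms(3) by (intro gamma_density_convolution) auto
  moreover have "distributed M lborel (\<lambda>\<omega>. Y i \<omega> + (\<Sum>j\<in>I. Y j \<omega>))
      (\<lambda>x. \<integral>\<^sup>+y. ennreal (gamma_density (k i) th (x - y)) * ennreal (gamma_density (\<Sum>j\<in>I. k j) th y) \<partial>lborel)"
    using insert by (intro distributed_convolution indep_vars_sum) (auto intro: indep_vars_subset)
  ultimately show ?case
    using insert by simp
qed

lemma (in prob_space) gamma_distributed_mean:
  fixes k th :: real
  assumes "finite J" and "J \<noteq> {}" and "k > 0" and "th > 0"
    and "\<And>j. j \<in> J \<Longrightarrow> distributed M lborel (Y j) (\<lambda>x. ennreal (gamma_density k th x))"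
    and "indep_vars (\<lambda>_. borel) Y J"
  shows "distributed M lborel (\<lambda>\<omega>. (\<Sum>j\<in>J. Y j \<omega>) / card J)
           (\<lambda>x. ennreal (gamma_density (card J * k) (th / card J) x))"
proof -
  have n: "real (card J) > 0"
    using assms(1,2) by (simp add: card_gt_0_iff)
  have "distributed M lborel (\<lambda>\<omega>. \<Sum>j\<in>J. Y j \<omega>) (\<lambda>x. ennreal (gamma_density (card J * k) th x))"
    using gamma_distributed_sum[of J th "\<lambda>_. k" Y] assms by simp
  from distributed_affine[OF this, of "1 / card J" 0] n
  have "distributed M lborel (\<lambda>\<omega>. (\<Sum>j\<in>J. Y j \<omega>) / card J)
          (\<lambda>x. ennreal (gamma_density (card J * k) th (x / (1 / card J))) / (1 / card J))"
    by simp
  also have "(\<lambda>x. ennreal (gamma_density (card J * k) th (x / (1 / card J))) / (1 / card J))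
           = (\<lambda>x. ennreal (gamma_density (card J * k) (th / card J) x))"
    using gamma_density_scale[of "1 / card J" th] n assms(3,4)
    by (simp add: divide_ennreal gamma_density_nonneg)
  finally show ?thesis .
qed

lemma nn_integral_indicator_UN_incseq:
  fixes f :: "real \<Rightarrow> ennreal"
  assumes [measurable]: "f \<in> borel_measurable borel" and "incseq A" and "\<And>n. A n \<in> sets borel"
  shows "(SUP n. \<integral>\<^sup>+x. f x * indicator (A n) x \<partial>lborel) = (\<integral>\<^sup>+x. f x * indicator (\<Union>n. A n) x \<partial>lborel)"
proof -
  have "(SUP n. emeasure (density lborel f) (A n)) = emeasure (density lborel f) (\<Union>n. A n)"
    using assms(2,3) by (intro SUP_emeasure_incseq) auto
  then show ?thesis
    using assms(3) by (simp add: emeasure_density sets.countable_UN)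
qed

lemma UN_Icc_exp_eq_Ioi:
  assumes "k > 0"
  shows "(\<Union>n::nat. {k * exp (- real n) .. k * exp (real n)}) = {0<..}"
proof (rule subset_antisym)
  show "(\<Union>n::nat. {k * exp (- real n) .. k * exp (real n)}) \<subseteq> {0<..}"
  proof (rule UN_least)
    fix n :: nat
    have "0 < k * exp (- real n)"
      using assms by simp
    then show "{k * exp (- real n) .. k * exp (real n)} \<subseteq> {0<..}"
      by auto
  qed
  show "{0<..} \<subseteq> (\<Union>n::nat. {k * exp (- real n) .. k * exp (real n)})"
  proof
    fix x :: real
    assume "x \<in> {0<..}"
    then have x: "x > 0"
      by simp
    obtain n :: nat where n: "\<bar>ln (x / k)\<bar> \<le> real n"
      using real_arch_simple by blast
    have "exp (- real n) \<le> exp (ln (x / k))" and "exp (ln (x / k)) \<le> exp (real n)"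
      using n by simp_all
    then have "x \<in> {k * exp (- real n) .. k * exp (real n)}"
      using x assms by (simp add: field_simps)
    then show "x \<in> (\<Union>n::nat. {k * exp (- real n) .. k * exp (real n)})"
      by blast
  qed
qed

lemma UN_Icc_real_eq_UNIV: "(\<Union>n::nat. {- real n .. real n}) = UNIV"
proof -
  have "x \<in> (\<Union>n::nat. {- real n .. real n})" for x :: real
  proof -
    obtain n :: nat where "\<bar>x\<bar> \<le> real n"
      using real_arch_simple by blast
    then have "x \<in> {- real n .. real n}"
      by (simp add: abs_le_iff)
    then show ?thesis
      by blast
  qed
  then show ?thesis
    by blast
qed

lemma nn_integral_Ioi_exp_substitution:
  fixes f :: "real \<Rightarrow> real"
  assumes [measurable]: "f \<in> borel_measurable borel" and k: "k > 0"
  shows "(\<integral>\<^sup>+x. ennreal (f x) * indicator {0<..} x \<partial>lborel)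
       = (\<integral>\<^sup>+s. ennreal (f (k * exp s) * (k * exp s)) \<partial>lborel)"
proof -
  define A where "A n = {k * exp (- real n) .. k * exp (real n)}" for n :: nat
  define B where "B n = {- real n .. real n}" for n :: nat
  have "incseq A"
    using k by (auto simp: A_def incseq_def mult_le_cancel_left_pos)
  have "incseq B"
    by (auto simp: B_def incseq_def)
  have "(\<integral>\<^sup>+x. ennreal (f x) * indicator (A n) x \<partial>lborel)
      = (\<integral>\<^sup>+s. ennreal (f (k * exp s) * (k * exp s)) * indicator (B n) s \<partial>lborel)" for n
  proof -
    have "set_borel_measurable borel (A n) f"
      unfolding set_borel_measurable_def A_def by measurable
    then have "(\<integral>\<^sup>+x. f x * indicator (A n) x \<partial>lborel)
        = (\<integral>\<^sup>+s. f (k * exp s) * (k * exp s) * indicator (B n) s \<partial>lborel)"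
      unfolding A_def B_def using k
      by (intro nn_integral_substitution[where g'="\<lambda>s. k * exp s"])
         (auto intro!: derivative_eq_intros continuous_on_mult_left continuous_on_exp continuous_on_id)
    then show ?thesis
      by (simp add: ennreal_mult'' ennreal_indicator)
  qed
  note step = this
  have "(\<integral>\<^sup>+x. ennreal (f x) * indicator {0<..} x \<partial>lborel)
      = (\<integral>\<^sup>+x. ennreal (f x) * indicator (\<Union>n. A n) x \<partial>lborel)"
    unfolding A_def UN_Icc_exp_eq_Ioi[OF k] ..
  also have "\<dots> = (SUP n. \<integral>\<^sup>+x. ennreal (f x) * indicator (A n) x \<partial>lborel)"
    by (rule nn_integral_indicator_UN_incseq[symmetric, OF _ \<open>incseq A\<close>]) (auto simp: A_def)
  also have "\<dots> = (SUP n. \<integral>\<^sup>+s. ennreal (f (k * exp s) * (k * exp s)) * indicator (B n) s \<partial>lborel)"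
    by (simp add: step)
  also have "\<dots> = (\<integral>\<^sup>+s. ennreal (f (k * exp s) * (k * exp s)) * indicator (\<Union>n. B n) s \<partial>lborel)"
    by (rule nn_integral_indicator_UN_incseq[OF _ \<open>incseq B\<close>]) (auto simp: B_def)
  also have "\<dots> = (\<integral>\<^sup>+s. ennreal (f (k * exp s) * (k * exp s)) \<partial>lborel)"
    unfolding B_def UN_Icc_real_eq_UNIV by simp
  finally show ?thesis .
qed

lemma borel_measurable_cosh [measurable]: "(cosh :: real \<Rightarrow> real) \<in> borel_measurable borel"
  by (intro borel_measurable_continuous_onI continuous_intros)

lemma nn_integral_even:
  fixes h :: "real \<Rightarrow> real"
  assumes [measurable]: "h \<in> borel_measurable borel" and even: "\<And>s. h (- s) = h s"
  shows "(\<integral>\<^sup>+s. ennreal (h s) \<partial>lborel) = 2 * (\<integral>\<^sup>+t. ennreal (indicator {0..} t * h t) \<partial>lborel)"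
proof -
  have "(\<integral>\<^sup>+t. ennreal (indicator {..<0} t * h t) \<partial>lborel)
      = (\<integral>\<^sup>+t. ennreal (indicator {0<..} t * h t) \<partial>lborel)"
    using nn_integral_real_affine[where c="-1" and t=0 and f="\<lambda>t. ennreal (indicator {..<0} t * h t)"]
    by (simp add: even indicator_def)
  also have "\<dots> = (\<integral>\<^sup>+t. ennreal (indicator {0..} t * h t) \<partial>lborel)"
    by (rule nn_integral_cong_AE) (rule AE_I[where N="{0}"], auto simp: indicator_def)
  finally have neg: "(\<integral>\<^sup>+t. ennreal (indicator {..<0} t * h t) \<partial>lborel)
      = (\<integral>\<^sup>+t. ennreal (indicator {0..} t * h t) \<partial>lborel)" .
  have "(\<integral>\<^sup>+s. ennreal (h s) \<partial>lborel)
      = (\<integral>\<^sup>+t. ennreal (indicator {0..} t * h t) + ennreal (indicator {..<0} t * h t) \<partial>lborel)"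
    by (rule nn_integral_cong) (auto simp: indicator_def)
  also have "\<dots> = 2 * (\<integral>\<^sup>+t. ennreal (indicator {0..} t * h t) \<partial>lborel)"
    by (subst nn_integral_add) (auto simp: neg mult_2)
  finally show ?thesis .
qed

lemma nn_integral_exp_mult_even:
  fixes h :: "real \<Rightarrow> real"
  assumes [measurable]: "h \<in> borel_measurable borel"
    and even: "\<And>s. h (- s) = h s" and nonneg: "\<And>s. 0 \<le> h s"
  shows "(\<integral>\<^sup>+s. ennreal (exp (\<nu> * s) * h s) \<partial>lborel) = (\<integral>\<^sup>+s. ennreal (cosh (\<nu> * s) * h s) \<partial>lborel)"
proof -
  define J where "J = (\<integral>\<^sup>+s. ennreal (exp (\<nu> * s) * h s) \<partial>lborel)"
  have J_reflected: "J = (\<integral>\<^sup>+s. ennreal (exp (- \<nu> * s) * h s) \<partial>lborel)"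
    using nn_integral_real_affine[where c="-1" and t=0 and f="\<lambda>s. ennreal (exp (\<nu> * s) * h s)"]
    by (simp add: J_def even)
  have pointwise: "ennreal 2 * ennreal (cosh (\<nu> * s) * h s)
      = ennreal (exp (\<nu> * s) * h s) + ennreal (exp (- \<nu> * s) * h s)" for s
  proof -
    have "ennreal 2 * ennreal (cosh (\<nu> * s) * h s) = ennreal (2 * (cosh (\<nu> * s) * h s))"
      using nonneg[of s] by (simp add: ennreal_mult)
    also have "2 * (cosh (\<nu> * s) * h s) = exp (\<nu> * s) * h s + exp (- \<nu> * s) * h s"
      by (simp add: cosh_def field_simps)
    finally show ?thesis
      using nonneg[of s] by simp
  qed
  have "2 * (\<integral>\<^sup>+s. ennreal (cosh (\<nu> * s) * h s) \<partial>lborel)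
      = (\<integral>\<^sup>+s. ennreal 2 * ennreal (cosh (\<nu> * s) * h s) \<partial>lborel)"
    by (simp add: nn_integral_cmult)
  also have "\<dots> = J + (\<integral>\<^sup>+s. ennreal (exp (- \<nu> * s) * h s) \<partial>lborel)"
    unfolding pointwise J_def by (simp add: nn_integral_add)
  also have "\<dots> = J + J"
    using J_reflected by simp
  finally show ?thesis
    by (simp add: J_def mult_2[symmetric] ennreal_mult_cancel_left)
qed

(* The integral of besselK_def in ennreal, meaningful before its finiteness is known. *)
definition nn_besselK :: "real \<Rightarrow> real \<Rightarrow> ennreal" where
  "nn_besselK \<nu> z = (\<integral>\<^sup>+t. ennreal (indicator {0..} t * (exp (- z * cosh t) * cosh (\<nu> * t))) \<partial>lborel)"

lemma besselK_eq_enn2real: "besselK \<nu> z = enn2real (nn_besselK \<nu> z)"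
  unfolding besselK_def nn_besselK_def set_lebesgue_integral_def real_scaleR_def
  by (rule integral_eq_nn_integral) (auto simp: indicator_def order_less_imp_le)

lemma exp_substitution_kernel:
  assumes "a > 0" and "c > 0"
  defines "k \<equiv> sqrt (c / a)"
  shows "(k * exp s) powr (\<nu> - 1) * exp (- (a * (k * exp s) + c / (k * exp s))) * (k * exp s)
       = k powr \<nu> * (exp (\<nu> * s) * exp (- (2 * sqrt (a * c)) * cosh s))"
proof -
  have k: "k > 0"
    using assms by (simp add: k_def)
  have "sqrt a * sqrt a = a" and "sqrt c * sqrt c = c"
    using assms by simp_all
  then have ak: "a * k = sqrt (a * c)" and ck: "c / k = sqrt (a * c)"
    using assms by (simp_all add: k_def real_sqrt_divide real_sqrt_mult field_simps)
  have "a * (k * exp s) + c / (k * exp s) = (a * k) * exp s + (c / k) * exp (- s)"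
    by (simp add: exp_minus field_simps)
  also have "\<dots> = 2 * sqrt (a * c) * cosh s"
    unfolding ak ck by (simp add: cosh_def field_simps)
  finally have "a * (k * exp s) + c / (k * exp s) = 2 * sqrt (a * c) * cosh s" .
  moreover have "(k * exp s) powr (\<nu> - 1) * (k * exp s) = (k * exp s) powr \<nu>"
    using k by (simp add: powr_diff)
  moreover have "(k * exp s) powr \<nu> = k powr \<nu> * exp (\<nu> * s)"
    using k by (simp add: powr_def ln_mult exp_add[symmetric] distrib_left)
  ultimately show ?thesis
    by (simp add: mult_ac)
qed

lemma nn_integral_powr_exp_inverse:
  assumes "a > 0" and "c > 0"
  shows "(\<integral>\<^sup>+x. ennreal (x powr (\<nu> - 1) * exp (- (a * x + c / x))) * indicator {0<..} x \<partial>lborel)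
       = ennreal (2 * sqrt (c / a) powr \<nu>) * nn_besselK \<nu> (2 * sqrt (a * c))"
proof -
  define k where "k = sqrt (c / a)"
  define z where "z = 2 * sqrt (a * c)"
  have k: "k > 0"
    using assms by (simp add: k_def)
  have "(\<integral>\<^sup>+x. ennreal (x powr (\<nu> - 1) * exp (- (a * x + c / x))) * indicator {0<..} x \<partial>lborel)
      = (\<integral>\<^sup>+s. ennreal ((k * exp s) powr (\<nu> - 1) * exp (- (a * (k * exp s) + c / (k * exp s))) * (k * exp s)) \<partial>lborel)"
    by (rule nn_integral_Ioi_exp_substitution[OF _ k]) measurable
  also have "\<dots> = (\<integral>\<^sup>+s. ennreal (k powr \<nu>) * ennreal (exp (\<nu> * s) * exp (- z * cosh s)) \<partial>lborel)"
    using exp_substitution_kernel[OF assms] by (simp add: k_def z_def ennreal_mult'')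
  also have "\<dots> = ennreal (k powr \<nu>) * (\<integral>\<^sup>+s. ennreal (exp (\<nu> * s) * exp (- z * cosh s)) \<partial>lborel)"
    by (rule nn_integral_cmult) measurable
  also have "(\<integral>\<^sup>+s. ennreal (exp (\<nu> * s) * exp (- z * cosh s)) \<partial>lborel)
      = (\<integral>\<^sup>+s. ennreal (cosh (\<nu> * s) * exp (- z * cosh s)) \<partial>lborel)"
    by (rule nn_integral_exp_mult_even) auto
  also have "\<dots> = 2 * nn_besselK \<nu> z"
    by (subst nn_integral_even) (auto simp: nn_besselK_def mult_ac)
  finally show ?thesis
    by (simp add: k_def z_def ennreal_mult'' mult_ac)
qed

definition product_density :: "(real \<Rightarrow> real) \<Rightarrow> (real \<Rightarrow> real) \<Rightarrow> real \<Rightarrow> ennreal" where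
  "product_density f g u = (\<integral>\<^sup>+x. ennreal (f x * g (u / x) / x) * indicator {0<..} x \<partial>lborel)"

lemma borel_measurable_product_density [measurable]:
  assumes [measurable]: "f \<in> borel_measurable borel" "g \<in> borel_measurable borel"
  shows "product_density f g \<in> borel_measurable borel"
  unfolding product_density_def by measurable

lemma gamma_density_product_kernel:
  assumes "a > 0" and "b > 0" and "u > 0" and "x > 0"
  shows "gamma_density a (1/a) x * gamma_density b (1/b) (u/x) / x
       = a powr a * b powr b / (Gamma a * Gamma b) * u powr (b - 1)
           * (x powr ((a - b) - 1) * exp (- (a * x + b * u / x)))"
proof -
  have "x powr (((a - b) - 1) + (b - 1) + 1) = x powr ((a - b) - 1) * x powr (b - 1) * x powr 1"
    by (simp only: powr_add)
  then have "x powr (a - 1) = x powr ((a - b) - 1) * x powr (b - 1) * x"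
    using assms(4) by simp
  moreover have "exp (- x / (1/a)) * exp (- (u / x) / (1/b)) = exp (- (a * x + b * u / x))"
    by (simp add: exp_add[symmetric] field_simps)
  moreover have "(u / x) powr (b - 1) = u powr (b - 1) / x powr (b - 1)"
    using assms(3,4) by (simp add: powr_divide)
  ultimately show ?thesis
    using assms Gamma_real_pos[OF assms(1)] Gamma_real_pos[OF assms(2)]
    by (simp add: gamma_density_def powr_divide field_simps)
qed

lemma gamma_product_density:
  assumes "a > 0" and "b > 0" and "u > 0"
  shows "product_density (gamma_density a (1/a)) (gamma_density b (1/b)) u
       = ennreal (2 * (a * b) powr ((a + b) / 2) / (Gamma a * Gamma b) * u powr ((a + b) / 2 - 1))
           * nn_besselK (a - b) (2 * sqrt (a * b * u))"
proof -
  define D where "D = a powr a * b powr b / (Gamma a * Gamma b) * u powr (b - 1)"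
  have D: "D \<ge> 0"
    using assms by (simp add: D_def)
  have "product_density (gamma_density a (1/a)) (gamma_density b (1/b)) u
      = (\<integral>\<^sup>+x. ennreal D * (ennreal (x powr ((a - b) - 1) * exp (- (a * x + b * u / x))) * indicator {0<..} x) \<partial>lborel)"
    unfolding product_density_def
  proof (rule nn_integral_cong)
    fix x :: real
    show "ennreal (gamma_density a (1/a) x * gamma_density b (1/b) (u / x) / x) * indicator {0<..} x
        = ennreal D * (ennreal (x powr ((a - b) - 1) * exp (- (a * x + b * u / x))) * indicator {0<..} x)"
    proof (cases "x > 0")
      case True
      then show ?thesis
        using D by (simp add: gamma_density_product_kernel[OF assms True, folded D_def] ennreal_mult)
    qed simp
  qed
  also have "\<dots> = ennreal D * (ennreal (2 * sqrt (b * u / a) powr (a - b)) * nn_besselK (a - b) (2 * sqrt (a * (b * u))))"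
    using nn_integral_powr_exp_inverse[of a "b * u" "a - b"] assms by (simp add: nn_integral_cmult)
  also have "\<dots> = ennreal (D * (2 * sqrt (b * u / a) powr (a - b))) * nn_besselK (a - b) (2 * sqrt (a * b * u))"
    using D by (simp add: ennreal_mult'' mult_ac)
  also have "D * (2 * sqrt (b * u / a) powr (a - b))
      = 2 * (a * b) powr ((a + b) / 2) / (Gamma a * Gamma b) * u powr ((a + b) / 2 - 1)"
  proof -
    have "sqrt (b * u / a) = exp (ln (b * u / a) / 2)"
      using assms by (simp add: powr_half_sqrt[symmetric] powr_def)
    then have "a powr a * b powr b * u powr (b - 1) * sqrt (b * u / a) powr (a - b)
        = (a * b) powr ((a + b) / 2) * u powr ((a + b) / 2 - 1)"
      using assms by (simp add: powr_def exp_add[symmetric] ln_mult ln_div field_simps)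
    then show ?thesis
      by (simp add: D_def field_simps)
  qed
  finally show ?thesis .
qed

lemma (in prob_space) emeasure_mult_less_product_density:
  assumes [measurable]: "f \<in> borel_measurable borel" "g \<in> borel_measurable borel"
    and nonneg: "\<And>x. 0 \<le> f x" "\<And>x. 0 \<le> g x" and f_Ioi: "\<And>x. x \<le> 0 \<Longrightarrow> f x = 0"
    and indep: "indep_var borel X borel Z"
    and X: "distributed M lborel X (\<lambda>x. ennreal (f x))"
    and Z: "distributed M lborel Z (\<lambda>x. ennreal (g x))"
  shows "emeasure M {\<omega> \<in> space M. X \<omega> * Z \<omega> < c}
       = (\<integral>\<^sup>+u. product_density f g u * indicator {..<c} u \<partial>lborel)"
proof -
  have "indep_var lborel X lborel Z"
    using indep unfolding indep_var_def indep_vars_def by (simp add: bool.case_eq_if)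
  then have joint: "distributed M (lborel \<Otimes>\<^sub>M lborel) (\<lambda>\<omega>. (X \<omega>, Z \<omega>))
      (\<lambda>(x, z). ennreal (f x) * ennreal (g z))"
    by (intro distributed_joint_indep[OF _ _ X Z]) (auto intro: lborel.sigma_finite_measure_axioms)
  define S where "S = {p \<in> space (lborel \<Otimes>\<^sub>M lborel). fst p * snd p < c}"
  have S[measurable]: "S \<in> sets (lborel \<Otimes>\<^sub>M lborel)"
    unfolding S_def by measurable
  have inner: "(\<integral>\<^sup>+z. ennreal (f x) * ennreal (g z) * indicator S (x, z) \<partial>lborel)
      = (\<integral>\<^sup>+u. ennreal (f x * g (u / x) / x) * indicator {0<..} x * indicator {..<c} u \<partial>lborel)" for x
  proof (cases "x > 0")
    case True
    have "(\<integral>\<^sup>+z. ennreal (f x) * ennreal (g z) * indicator S (x, z) \<partial>lborel)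
        = ennreal (1 / x) * (\<integral>\<^sup>+u. ennreal (f x) * ennreal (g (u / x)) * indicator S (x, u / x) \<partial>lborel)"
      using nn_integral_real_affine[of "\<lambda>z. ennreal (f x) * ennreal (g z) * indicator S (x, z)" "1 / x" 0] True
      by (simp add: S_def)
    also have "\<dots> = (\<integral>\<^sup>+u. ennreal (f x * g (u / x) / x) * indicator {0<..} x * indicator {..<c} u \<partial>lborel)"
      using True nonneg
      by (subst nn_integral_cmult[symmetric])
         (auto simp: S_def space_pair_measure indicator_def ennreal_mult'[symmetric] divide_nonneg_pos
           intro!: nn_integral_cong)
    finally show ?thesis .
  qed (simp add: f_Ioi)
  have "{\<omega> \<in> space M. X \<omega> * Z \<omega> < c} = (\<lambda>\<omega>. (X \<omega>, Z \<omega>)) -` S \<inter> space M"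
    by (auto simp: S_def space_pair_measure)
  then have "emeasure M {\<omega> \<in> space M. X \<omega> * Z \<omega> < c}
      = (\<integral>\<^sup>+p. (\<lambda>(x, z). ennreal (f x) * ennreal (g z)) p * indicator S p \<partial>(lborel \<Otimes>\<^sub>M lborel))"
    using distributed_emeasure[OF joint S] by simp
  also have "\<dots> = (\<integral>\<^sup>+x. \<integral>\<^sup>+z. ennreal (f x) * ennreal (g z) * indicator S (x, z) \<partial>lborel \<partial>lborel)"
    by (subst lborel.nn_integral_fst[symmetric]) (simp_all add: case_prod_beta)
  also have "\<dots> = (\<integral>\<^sup>+x. \<integral>\<^sup>+u. ennreal (f x * g (u / x) / x) * indicator {0<..} x * indicator {..<c} u \<partial>lborel \<partial>lborel)"
    unfolding inner ..
  also have "\<dots> = (\<integral>\<^sup>+u. \<integral>\<^sup>+x. ennreal (f x * g (u / x) / x) * indicator {0<..} x * indicator {..<c} u \<partial>lborel \<partial>lborel)"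
    by (rule lborel_pair.Fubini'[symmetric]) measurable
  also have "\<dots> = (\<integral>\<^sup>+u. product_density f g u * indicator {..<c} u \<partial>lborel)"
    unfolding product_density_def by (rule nn_integral_cong, rule nn_integral_multc) measurable
  finally show ?thesis .
qed

lemma product_density_nonpos:
  assumes "\<And>z. z \<le> 0 \<Longrightarrow> g z = 0" and "u \<le> 0"
  shows "product_density f g u = 0"
proof -
  have "ennreal (f x * g (u / x) / x) * indicator {0<..} x = 0" for x
    using assms by (cases "x > 0") (simp_all add: divide_nonpos_pos)
  then show ?thesis
    by (simp add: product_density_def del: mult_eq_0_iff)
qed

lemma gg_density_eq_product_density:
  assumes "a > 0" and "b > 0" and "u > 0"
  shows "gg_density a b u = enn2real (product_density (gamma_density a (1/a)) (gamma_density b (1/b)) u)"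
  using assms
  by (simp add: gamma_product_density gg_density_def besselK_eq_enn2real enn2real_mult)

lemma borel_measurable_gg_density [measurable]: "gg_density a b \<in> borel_measurable borel"
  unfolding gg_density_def besselK_eq_enn2real nn_besselK_def by measurable

lemma gg_density_nonneg: "a > 0 \<Longrightarrow> b > 0 \<Longrightarrow> 0 \<le> gg_density a b u"
  by (simp add: gg_density_def besselK_eq_enn2real)

lemma (in prob_space) prob_mult_less_gamma_gamma:
  assumes "a > 0" and "b > 0" and indep: "indep_var borel X borel Z"
    and X: "distributed M lborel X (\<lambda>x. ennreal (gamma_density a (1/a) x))"
    and Z: "distributed M lborel Z (\<lambda>x. ennreal (gamma_density b (1/b) x))"
  shows "prob {\<omega> \<in> space M. X \<omega> * Z \<omega> < c} = gg_CDF a b c"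
proof -
  let ?h = "product_density (gamma_density a (1/a)) (gamma_density b (1/b))"
  have E: "emeasure M {\<omega> \<in> space M. X \<omega> * Z \<omega> < c} = (\<integral>\<^sup>+u. ?h u * indicator {..<c} u \<partial>lborel)"
    using assms by (intro emeasure_mult_less_product_density) (simp_all add: gamma_density_nonneg)
  \<comment> \<open>finiteness of the probability makes the Bessel integral finite almost everywhere below c\<close>
  then have "AE u in lborel. ?h u * indicator {..<c} u \<noteq> \<infinity>"
    by (intro nn_integral_noteq_infinite) (simp_all flip: E)
  then have AE: "AE u in lborel. ?h u * indicator {..<c} u = ennreal (indicator {0..c} u * gg_density a b u)"
    using AE_lborel_singleton[of 0] AE_lborel_singleton[of c]
  proof eventually_elim
    case (elim u)
    consider "u < 0" | "0 < u" "u < c" | "0 < u" "c \<le> u"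
      using elim by linarith
    then show ?case
    proof cases
      case 2
      then show ?thesis
        using elim assms by (simp add: gg_density_eq_product_density less_top)
    qed (use elim in \<open>simp_all add: product_density_nonpos indicator_def\<close>)
  qed
  have "gg_CDF a b c = enn2real (\<integral>\<^sup>+u. ennreal (indicator {0..c} u * gg_density a b u) \<partial>lborel)"
    unfolding gg_CDF_def set_lebesgue_integral_def real_scaleR_def
    by (rule integral_eq_nn_integral) (auto simp: gg_density_nonneg assms)
  also have "\<dots> = enn2real (\<integral>\<^sup>+u. ?h u * indicator {..<c} u \<partial>lborel)"
    using AE by (simp add: nn_integral_cong_AE)
  finally show ?thesis
    by (simp add: measure_def E)
qed

lemma (in prob_space) indep_vars_restrict_compose:
  assumes "indep_vars (\<lambda>_. borel) V I" and "\<And>j. j \<in> L \<Longrightarrow> K j \<subseteq> I" and "disjoint_family_on K L"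
    and "\<And>j. j \<in> L \<Longrightarrow> g j \<in> borel_measurable (PiM (K j) (\<lambda>_. borel))"
  shows "indep_vars (\<lambda>_. borel) (\<lambda>j \<omega>. g j (restrict (\<lambda>k. V k \<omega>) (K j)) :: real) L"
  using indep_vars_compose2[OF indep_vars_restrict[OF assms(1-3)] assms(4)] by simp

lemma (in prob_space) indep_var_restrict_compose:
  assumes "indep_vars (\<lambda>_. borel) V I" and "K \<inter> L = {}" "K \<subseteq> I" "L \<subseteq> I"
    and "f \<in> borel_measurable (PiM K (\<lambda>_. borel))" and "g \<in> borel_measurable (PiM L (\<lambda>_. borel))"
  shows "indep_var borel (\<lambda>\<omega>. f (restrict (\<lambda>k. V k \<omega>) K) :: real) borel (\<lambda>\<omega>. g (restrict (\<lambda>k. V k \<omega>) L) :: real)"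
  using indep_var_compose[OF indep_var_restrict[OF assms(1-4)] assms(5,6)] by (simp add: comp_def)

lemma (in prob_space) prob_all_less_indep_vars:
  fixes W :: "'i \<Rightarrow> 'a \<Rightarrow> real"
  assumes "indep_vars (\<lambda>_. borel) W A" and "finite A" and "A \<noteq> {}"
    and "\<And>i. i \<in> A \<Longrightarrow> prob {\<omega> \<in> space M. W i \<omega> < c} = p"
  shows "prob {\<omega> \<in> space M. \<forall>i\<in>A. W i \<omega> < c} = p ^ card A"
proof -
  have "{\<omega> \<in> space M. \<forall>i\<in>A. W i \<omega> < c} = (\<Inter>i\<in>A. W i -` {..<c} \<inter> space M)"
    using assms(3) by auto
  also have "prob \<dots> = (\<Prod>i\<in>A. prob (W i -` {..<c} \<inter> space M))"
    using assms(1-3) by (intro indep_varsD_finite) auto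
  also have "\<dots> = (\<Prod>i\<in>A. p)"
    using assms(4) by (intro prod.cong) (auto simp: vimage_def Int_def conj_commute)
  finally show ?thesis
    by simp
qed

lemma (in prob_space) AE_gamma_distributed_pos:
  assumes "distributed M lborel X (\<lambda>x. ennreal (gamma_density k th x))"
  shows "AE \<omega> in M. 0 < X \<omega>"
proof -
  have "AE x in lborel. 0 < ennreal (gamma_density k th x) \<longrightarrow> 0 < x"
    by (rule AE_I2) (metis gamma_density_nonpos not_less order_less_irrefl ennreal_0)
  then show ?thesis
    using distributed_AE2[OF assms] by simp
qed

lemma (in prob_space) prob_branch_gain_less:
  fixes X :: "'a \<Rightarrow> real" and Y :: "'j \<Rightarrow> 'a \<Rightarrow> real" and \<alpha> \<beta> :: real
  assumes "finite B" and "B \<noteq> {}" and "\<alpha> > 0" and "\<beta> > 0"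
    and "indep_vars (\<lambda>_. borel) Y B"
    and "indep_var borel X borel (\<lambda>\<omega>. (\<Sum>j\<in>B. Y j \<omega>) / card B)"
    and "distributed M lborel X (\<lambda>x. ennreal (gamma_density \<alpha> (1/\<alpha>) x))"
    and "\<And>j. j \<in> B \<Longrightarrow> distributed M lborel (Y j) (\<lambda>x. ennreal (gamma_density \<beta> (1/\<beta>) x))"
  shows "prob {\<omega> \<in> space M. X \<omega> * ((\<Sum>j\<in>B. Y j \<omega>) / card B) < c} = gg_CDF \<alpha> (card B * \<beta>) c"
proof -
  have "distributed M lborel (\<lambda>\<omega>. (\<Sum>j\<in>B. Y j \<omega>) / card B)
      (\<lambda>x. ennreal (gamma_density (card B * \<beta>) (1 / \<beta> / card B) x))"
    using assms by (intro gamma_distributed_mean) simp_all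
  then show ?thesis
    using assms by (intro prob_mult_less_gamma_gamma) (simp_all add: card_gt_0_iff mult.commute)
qed

lemma (in prob_space) prob_all_branch_gains_less:
  fixes X :: "'i \<Rightarrow> 'a \<Rightarrow> real" and Y :: "'i \<Rightarrow> 'j \<Rightarrow> 'a \<Rightarrow> real" and \<alpha> \<beta> :: real
  assumes "finite A" and "A \<noteq> {}" and "finite B" and "B \<noteq> {}" and "\<alpha> > 0" and "\<beta> > 0"
    and indep: "indep_vars (\<lambda>_. borel) (\<lambda>k. case k of Inl i \<Rightarrow> X i | Inr (i, j) \<Rightarrow> Y i j)
                  (Inl ` A \<union> Inr ` (A \<times> B))"
    and X: "\<And>i. i \<in> A \<Longrightarrow> distributed M lborel (X i) (\<lambda>x. ennreal (gamma_density \<alpha> (1/\<alpha>) x))"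
    and Y: "\<And>i j. i \<in> A \<Longrightarrow> j \<in> B \<Longrightarrow> distributed M lborel (Y i j) (\<lambda>x. ennreal (gamma_density \<beta> (1/\<beta>) x))"
  shows "prob {\<omega> \<in> space M. \<forall>i\<in>A. X i \<omega> * ((\<Sum>j\<in>B. Y i j \<omega>) / card B) < c}
       = gg_CDF \<alpha> (card B * \<beta>) c ^ card A"
proof -
  define mean where "mean i f = (\<Sum>j\<in>B. f (Inr (i, j))) / card B" for i and f :: "'i + 'i \<times> 'j \<Rightarrow> real"
  have component: "(\<lambda>f. f k) \<in> borel_measurable (PiM K (\<lambda>_. borel))"
    if "k \<in> K" for k and K :: "('i + 'i \<times> 'j) set"
    using that by (rule measurable_component_singleton)
  have [measurable]: "mean i \<in> borel_measurable (PiM K (\<lambda>_. borel))" if "Inr ` ({i} \<times> B) \<subseteq> K" for i K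
    unfolding mean_def using that by (intro borel_measurable_divide borel_measurable_sum component) auto
  have indep_Y: "indep_vars (\<lambda>_. borel) (Y i) B" if "i \<in> A" for i
    using indep_vars_restrict_compose[OF indep, of B "\<lambda>j. {Inr (i, j)}" "\<lambda>j f. f (Inr (i, j))"] that
    by (auto simp: disjoint_family_on_def)
  have indep_X_mean: "indep_var borel (X i) borel (\<lambda>\<omega>. (\<Sum>j\<in>B. Y i j \<omega>) / card B)" if "i \<in> A" for i
    using indep_var_restrict_compose[OF indep, of "{Inl i}" "Inr ` ({i} \<times> B)" "\<lambda>f. f (Inl i)" "mean i"] that
    by (auto simp: mean_def)
  have indep_gains: "indep_vars (\<lambda>_. borel) (\<lambda>i \<omega>. X i \<omega> * ((\<Sum>j\<in>B. Y i j \<omega>) / card B)) A"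
    using indep_vars_restrict_compose[OF indep, of A "\<lambda>i. insert (Inl i) (Inr ` ({i} \<times> B))"
        "\<lambda>i f. f (Inl i) * mean i f"]
    by (auto simp: disjoint_family_on_def mean_def)
  show ?thesis
    using assms indep_Y indep_X_mean
    by (intro prob_all_less_indep_vars[OF indep_gains] prob_branch_gain_less) auto
qed

lemma log_capacity_less_iff:
  fixes X :: "'i \<Rightarrow> real" and Y :: "'i \<Rightarrow> 'j \<Rightarrow> real" and A\<^sub>0 N\<^sub>0 R :: real
  assumes "finite A" and "A \<noteq> {}" and "finite B" and "B \<noteq> {}" and "A\<^sub>0 > 0" and "N\<^sub>0 > 0"
    and nonneg: "\<And>i j. i \<in> A \<Longrightarrow> j \<in> B \<Longrightarrow> 0 \<le> X i * Y i j"
  shows "log 2 (1 + A\<^sub>0 * Max ((\<lambda>i. \<Sum>j\<in>B. X i * Y i j) ` A) / N\<^sub>0) < R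
     \<longleftrightarrow> (\<forall>i\<in>A. X i * ((\<Sum>j\<in>B. Y i j) / card B) < N\<^sub>0 * (2 powr R - 1) / (card B * A\<^sub>0))"
proof -
  define m where "m = Max ((\<lambda>i. \<Sum>j\<in>B. X i * Y i j) ` A)"
  have n: "real (card B) > 0"
    using assms(3,4) by (simp add: card_gt_0_iff)
  obtain i0 where i0: "i0 \<in> A"
    using assms(2) by blast
  have "0 \<le> (\<Sum>j\<in>B. X i0 * Y i0 j)"
    using i0 nonneg by (simp add: sum_nonneg)
  also have "\<dots> \<le> m"
    unfolding m_def using assms(1) i0 by (intro Max_ge) auto
  finally have "0 \<le> m" .
  then have "log 2 (1 + A\<^sub>0 * m / N\<^sub>0) < R \<longleftrightarrow> 1 + A\<^sub>0 * m / N\<^sub>0 < 2 powr R"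
    using assms(5,6) by (intro log_less_iff) (auto intro: add_pos_nonneg)
  also have "\<dots> \<longleftrightarrow> m < N\<^sub>0 * (2 powr R - 1) / A\<^sub>0"
    using assms(5,6) by (simp add: field_simps)
  also have "\<dots> \<longleftrightarrow> (\<forall>i\<in>A. (\<Sum>j\<in>B. X i * Y i j) < N\<^sub>0 * (2 powr R - 1) / A\<^sub>0)"
    unfolding m_def using assms(1,2) by simp
  also have "\<dots> \<longleftrightarrow> (\<forall>i\<in>A. X i * ((\<Sum>j\<in>B. Y i j) / card B) < N\<^sub>0 * (2 powr R - 1) / (card B * A\<^sub>0))"
    using n assms(5) by (simp add: sum_distrib_left[symmetric] field_simps)
  finally show ?thesis
    by (simp add: m_def)
qed

lemma (in prob_space) prob_outage_eq_prob_all_branch_gains_less: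
  fixes X :: "'i \<Rightarrow> 'a \<Rightarrow> real" and Y :: "'i \<Rightarrow> 'j \<Rightarrow> 'a \<Rightarrow> real" and A\<^sub>0 N\<^sub>0 R :: real
  assumes "finite A" and "A \<noteq> {}" and "finite B" and "B \<noteq> {}" and "A\<^sub>0 > 0" and "N\<^sub>0 > 0"
    and [measurable]: "\<And>i. i \<in> A \<Longrightarrow> X i \<in> borel_measurable M"
      "\<And>i j. i \<in> A \<Longrightarrow> j \<in> B \<Longrightarrow> Y i j \<in> borel_measurable M"
    and nonneg: "AE \<omega> in M. \<forall>i\<in>A. \<forall>j\<in>B. 0 \<le> X i \<omega> * Y i j \<omega>"
  shows "prob {\<omega> \<in> space M. R > log 2 (1 + A\<^sub>0 * Max ((\<lambda>i. \<Sum>j\<in>B. X i \<omega> * Y i j \<omega>) ` A) / N\<^sub>0)}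
       = prob {\<omega> \<in> space M. \<forall>i\<in>A. X i \<omega> * ((\<Sum>j\<in>B. Y i j \<omega>) / card B) < N\<^sub>0 * (2 powr R - 1) / (card B * A\<^sub>0)}"
proof (rule measure_eq_AE)
  show "AE \<omega> in M. \<omega> \<in> {\<omega> \<in> space M. R > log 2 (1 + A\<^sub>0 * Max ((\<lambda>i. \<Sum>j\<in>B. X i \<omega> * Y i j \<omega>) ` A) / N\<^sub>0)}
      \<longleftrightarrow> \<omega> \<in> {\<omega> \<in> space M. \<forall>i\<in>A. X i \<omega> * ((\<Sum>j\<in>B. Y i j \<omega>) / card B) < N\<^sub>0 * (2 powr R - 1) / (card B * A\<^sub>0)}"
    using nonneg by eventually_elim (simp add: log_capacity_less_iff assms(1-6))
qed (use assms(1,3) in measurable)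

theorem lemma2:
  fixes M :: "'w measure"
    and X :: "nat \<Rightarrow> 'w \<Rightarrow> real"
    and Y :: "nat \<Rightarrow> nat \<Rightarrow> 'w \<Rightarrow> real"
    and N_A N_B :: nat
    and \<alpha> \<beta> A\<^sub>0 N\<^sub>0 R\<^sub>B :: real
  assumes "prob_space M"
    and "N_A \<ge> 1" and "N_B \<ge> 1"
    and "\<alpha> > 0" and "\<beta> > 0" and "A\<^sub>0 > 0" and "N\<^sub>0 > 0" and "R\<^sub>B \<ge> 0"
    and "prob_space.indep_vars M (\<lambda>_. borel)
           (\<lambda>k. case k of Inl i \<Rightarrow> X i | Inr (i, j) \<Rightarrow> Y i j)
           (Inl ` {1..N_A} \<union> Inr ` ({1..N_A} \<times> {1..N_B}))"
    and "\<And>i. i \<in> {1..N_A} \<Longrightarrow>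
           distributed M lborel (X i) (\<lambda>x. ennreal (gamma_density \<alpha> (1 / \<alpha>) x))"
    and "\<And>i j. i \<in> {1..N_A} \<Longrightarrow> j \<in> {1..N_B} \<Longrightarrow>
           distributed M lborel (Y i j) (\<lambda>x. ennreal (gamma_density \<beta> (1 / \<beta>) x))"
  shows "let I\<^sub>B = (\<lambda>\<omega>. Max ((\<lambda>i. \<Sum>j\<in>{1..N_B}. X i \<omega> * Y i j \<omega>) ` {1..N_A}));
             \<gamma>\<^sub>B = (\<lambda>\<omega>. A\<^sub>0 * I\<^sub>B \<omega> / N\<^sub>0);
             C\<^sub>B = (\<lambda>\<omega>. log 2 (1 + \<gamma>\<^sub>B \<omega>));
             \<alpha>\<^sub>B = \<alpha>; \<beta>\<^sub>B = real N_B * \<beta>;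
             \<X>\<^sub>B = N\<^sub>0 * (2 powr R\<^sub>B - 1) / (real N_B * A\<^sub>0)
         in measure M {\<omega> \<in> space M. R\<^sub>B > C\<^sub>B \<omega>} = (gg_CDF \<alpha>\<^sub>B \<beta>\<^sub>B \<X>\<^sub>B) ^ N_A"
proof -
  interpret prob_space M by fact
  define A where "A = {1..N_A}"
  define B where "B = {1..N_B}"
  have A: "finite A" "A \<noteq> {}" "card A = N_A" and B: "finite B" "B \<noteq> {}" "card B = N_B"
    using assms(2,3) by (auto simp: A_def B_def)
  have pos: "AE \<omega> in M. 0 \<le> X i \<omega> * Y i j \<omega>" if "i \<in> A" "j \<in> B" for i j
  proof -
    have "AE \<omega> in M. 0 < X i \<omega>" and "AE \<omega> in M. 0 < Y i j \<omega>"
      using that assms(10,11) by (auto simp: A_def B_def intro!: AE_gamma_distributed_pos)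
    then show ?thesis
      by eventually_elim simp
  qed
  have "X i \<in> borel_measurable M" if "i \<in> A" for i
    using that assms(10) distributed_measurable by (fastforce simp: A_def)
  moreover have "Y i j \<in> borel_measurable M" if "i \<in> A" "j \<in> B" for i j
    using that assms(11) distributed_measurable by (fastforce simp: A_def B_def)
  moreover have "AE \<omega> in M. \<forall>i\<in>A. \<forall>j\<in>B. 0 \<le> X i \<omega> * Y i j \<omega>"
    using pos A(1) B(1) by (intro AE_finite_allI) auto
  ultimately have "measure M {\<omega> \<in> space M. R\<^sub>B > log 2 (1 + A\<^sub>0 * Max ((\<lambda>i. \<Sum>j\<in>B. X i \<omega> * Y i j \<omega>) ` A) / N\<^sub>0)}
      = prob {\<omega> \<in> space M. \<forall>i\<in>A. X i \<omega> * ((\<Sum>j\<in>B. Y i j \<omega>) / card B) < N\<^sub>0 * (2 powr R\<^sub>B - 1) / (card B * A\<^sub>0)}"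
    using A B assms(6,7) by (intro prob_outage_eq_prob_all_branch_gains_less) auto
  also have "\<dots> = gg_CDF \<alpha> (N_B * \<beta>) (N\<^sub>0 * (2 powr R\<^sub>B - 1) / (N_B * A\<^sub>0)) ^ N_A"
    using prob_all_branch_gains_less[OF A(1,2) B(1,2) assms(4,5)] assms(9-11) A B
    by (simp add: A_def B_def)
  finally show ?thesis
    by (simp add: A_def B_def Let_def)
qed

end
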